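(* Let $G$ be a character-free complex linear algebraic group. Let $D,D'$ be infinite discrete subsets of $G$ such that the symmetric difference $(D\setminus D')\cup(D'\setminus D)$ is finite. Then $D$ is tame if and only if $D'$ is tame.
   Context: A complex linear algebraic group $G$ is character-free if every morphism of algebraic groups $G\to\mathbb{C}^*$ is trivial. An exhaustion function on $G$ is a continuous $\rho:G\to\mathbb{R}^+$ with all sublevel sets compact. An infinite discrete subset $D$ of a complex manifold $X$ is called tame if for every exhaustion function $\rho$ on $X$ and every map $\zeta:D\to\mathbb{R}^+$ there exists a biholomorphic self-map $\phi$ of $X$ with $\rho(\phi(x))\ge\zeta(x)$ for all $x\in D$. *)

theory Defs
  imports "HOL-Analysis.Analysis"
begin

text \<open>Complex linear algebraic groups are modelled (as usual) as Zariski-closed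
subgroups of GL_n(C), matrices being complex^'n^'n for a finite index type 'n.\<close>

inductive_set poly_fun :: "((complex^'n^'n) \<Rightarrow> complex) set" where
  pf_const: "(\<lambda>A. c) \<in> poly_fun"
| pf_entry: "(\<lambda>A. A $ i $ j) \<in> poly_fun"
| pf_add: "p \<in> poly_fun \<Longrightarrow> q \<in> poly_fun \<Longrightarrow> (\<lambda>A. p A + q A) \<in> poly_fun"
| pf_mult: "p \<in> poly_fun \<Longrightarrow> q \<in> poly_fun \<Longrightarrow> (\<lambda>A. p A * q A) \<in> poly_fun"

definition lin_alg_group :: "(complex^'n^'n) set \<Rightarrow> bool" where
  "lin_alg_group G \<longleftrightarrow>
     (\<exists>P. P \<subseteq> poly_fun \<and> G = {A. invertible A \<and> (\<forall>p\<in>P. p A = 0)}) \<and>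
     mat 1 \<in> G \<and> (\<forall>A\<in>G. \<forall>B\<in>G. A ** B \<in> G) \<and> (\<forall>A\<in>G. matrix_inv A \<in> G)"

definition regular_on :: "(complex^'n^'n) set \<Rightarrow> ((complex^'n^'n) \<Rightarrow> complex) \<Rightarrow> bool" where
  "regular_on G f \<longleftrightarrow> (\<exists>p k. p \<in> poly_fun \<and> (\<forall>A\<in>G. f A = p A / det A ^ k))"

definition character_free :: "(complex^'n^'n) set \<Rightarrow> bool" where
  "character_free G \<longleftrightarrow>
     (\<forall>ch. regular_on G ch \<and> (\<forall>A\<in>G. ch A \<noteq> 0) \<and>
          (\<forall>A\<in>G. \<forall>B\<in>G. ch (A ** B) = ch A * ch B)
          \<longrightarrow> (\<forall>A\<in>G. ch A = 1))"

definition cscale :: "complex \<Rightarrow> complex^'n^'n \<Rightarrow> complex^'n^'n" where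
  "cscale c v = (\<chi> i j. c * v $ i $ j)"

text \<open>Holomorphic maps on the complex submanifold G of C^(n*n): locally restrictions
of complex-differentiable maps on open subsets of the ambient space.\<close>
definition holo_map :: "(complex^'n^'n) set \<Rightarrow> ((complex^'n^'n) \<Rightarrow> (complex^'n^'n)) \<Rightarrow> bool" where
  "holo_map G \<phi> \<longleftrightarrow>
     (\<forall>x\<in>G. \<exists>U F. open U \<and> x \<in> U \<and> (\<forall>z\<in>U \<inter> G. F z = \<phi> z) \<and>
        (\<forall>z\<in>U. \<exists>L. (F has_derivative L) (at z) \<and> (\<forall>c v. L (cscale c v) = cscale c (L v))))"

definition biholo :: "(complex^'n^'n) set \<Rightarrow> ((complex^'n^'n) \<Rightarrow> (complex^'n^'n)) \<Rightarrow> bool" where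
  "biholo G \<phi> \<longleftrightarrow> \<phi> ` G = G \<and> inj_on \<phi> G \<and> holo_map G \<phi> \<and> holo_map G (the_inv_into G \<phi>)"

text \<open>Discrete subset: closed discrete (no accumulation point in G).\<close>
definition discrete_in :: "'a::topological_space set \<Rightarrow> 'a set \<Rightarrow> bool" where
  "discrete_in X D \<longleftrightarrow> D \<subseteq> X \<and> (\<forall>x\<in>X. \<exists>U. open U \<and> x \<in> U \<and> finite (U \<inter> D))"

definition exhaustion :: "'a::topological_space set \<Rightarrow> ('a \<Rightarrow> real) \<Rightarrow> bool" where
  "exhaustion X \<rho> \<longleftrightarrow> continuous_on X \<rho> \<and> (\<forall>x\<in>X. \<rho> x \<ge> 0) \<and>
     (\<forall>c. compact {x\<in>X. \<rho> x \<le> c})"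

definition tame :: "(complex^'n^'n) set \<Rightarrow> (complex^'n^'n) set \<Rightarrow> bool" where
  "tame G D \<longleftrightarrow> infinite D \<and> discrete_in G D \<and>
     (\<forall>\<rho> \<zeta>. exhaustion G \<rho> \<and> (\<forall>x\<in>D. \<zeta> x \<ge> (0::real)) \<longrightarrow>
        (\<exists>\<phi>. biholo G \<phi> \<and> (\<forall>x\<in>D. \<rho> (\<phi> x) \<ge> \<zeta> x)))"

end

theory Submission
  imports Defs
begin

text \<open>Adding a point \<open>f\<close> to a tame set \<open>D\<close> keeps it tame. Given \<open>\<rho>\<close> and \<open>\<zeta>\<close>, the
sublevel set \<open>C = {\<rho> \<le> \<zeta> f}\<close> is compact, while \<open>G\<close> is not (it contains the infinite
discrete set \<open>D\<close>), so some left translate \<open>g C\<close> is disjoint from \<open>C\<close>: otherwise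
\<open>G = C C\<^sup>-\<^sup>1\<close>. Tameness of \<open>D\<close> for the exhaustion \<open>min \<rho> (\<rho> \<circ> L\<^sub>g)\<close> yields \<open>\<phi>\<close>
such that both \<open>\<phi>\<close> and \<open>L\<^sub>g \<circ> \<phi>\<close> push \<open>D\<close> far enough, and one of the two also moves
\<open>f\<close> out of \<open>C\<close>. Removing points trivially preserves tameness.\<close>

lemma matrix_inv_right: "invertible A \<Longrightarrow> A ** matrix_inv A = mat 1"
  and matrix_inv_left: "invertible A \<Longrightarrow> matrix_inv A ** A = mat 1"
  for A :: "'a::semiring_1^'n^'n"
  unfolding invertible_def matrix_inv_def by (metis (mono_tags, lifting) someI_ex)+

lemma matrix_mul_inv_cancel_left: "invertible A \<Longrightarrow> A ** (matrix_inv A ** B) = B"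
  and matrix_inv_mul_cancel_left: "invertible A \<Longrightarrow> matrix_inv A ** (A ** B) = B"
  for A :: "'a::semiring_1^'n^'n" and B :: "'a^'p^'n"
  by (simp_all add: matrix_mul_assoc matrix_inv_left matrix_inv_right)

lemma right_inverse_eq_matrix_inv:
  fixes A :: "'a::semiring_1^'n^'n"
  assumes "invertible A" "A ** B = mat 1"
  shows "B = matrix_inv A"
  by (metis assms matrix_inv_left matrix_mul_assoc matrix_mul_lid matrix_mul_rid)

lemma mat_1_neq_0: "(mat 1 :: 'a::zero_neq_one^'n^'n) \<noteq> 0"
  by (simp add: vec_eq_iff mat_def)

lemma bounded_bilinear_matrix_mult:
  "bounded_bilinear ((**) :: 'a::{euclidean_space, real_algebra_1}^'n^'m \<Rightarrow> 'a^'p^'n \<Rightarrow> 'a^'p^'m)"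
  unfolding bilinear_conv_bounded_bilinear[symmetric] bilinear_def
  by (intro conjI allI linearI)
     (simp_all add: vec_eq_iff matrix_matrix_mult_def sum.distrib ring_distribs scaleR_sum_right)

lemmas continuous_on_matrix_mult = bounded_bilinear.continuous_on[OF bounded_bilinear_matrix_mult]
lemmas bounded_linear_matrix_mult_left = bounded_bilinear.bounded_linear_right[OF bounded_bilinear_matrix_mult]

lemma bounded_right_inverses:
  fixes C :: "('a::{euclidean_space, real_algebra_1}^'n^'n) set"
  assumes C: "compact C" and inv: "\<And>y. y \<in> C \<Longrightarrow> invertible y"
  shows "bounded {w. \<exists>y\<in>C. y ** w = mat 1}"
proof -
  define K where "K = (\<lambda>p. fst p ** snd p) ` (C \<times> sphere (0 :: 'a^'n^'n) 1)"
  have "compact K"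
    unfolding K_def using C
    by (intro compact_continuous_image compact_Times continuous_on_matrix_mult continuous_intros) auto
  moreover have "0 \<notin> K"
  proof
    assume "0 \<in> K"
    then obtain y and u :: "'a^'n^'n" where "y \<in> C" "norm u = 1" "y ** u = 0"
      unfolding K_def by auto
    have "u = (matrix_inv y ** y) ** u"
      using \<open>y \<in> C\<close> by (simp add: matrix_inv_left inv)
    also have "\<dots> = 0"
      using \<open>y ** u = 0\<close>
      by (simp add: matrix_mul_assoc[symmetric] bounded_bilinear.zero_right[OF bounded_bilinear_matrix_mult])
    finally show False
      using \<open>norm u = 1\<close> by simp
  qed
  ultimately obtain d where "d > 0" and d: "\<And>x. x \<in> K \<Longrightarrow> d \<le> norm x"
    using separate_point_closed[of K 0] compact_imp_closed by (metis dist_0_norm)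
  have "norm w \<le> norm (mat 1 :: 'a^'n^'n) / d" if "y \<in> C" "y ** w = mat 1" for y w
  proof -
    have "w \<noteq> 0"
      using that mat_1_neq_0 by (auto simp: bounded_bilinear.zero_right[OF bounded_bilinear_matrix_mult])
    then have "y ** ((1 / norm w) *\<^sub>R w) \<in> K"
      unfolding K_def using \<open>y \<in> C\<close> by (intro image_eqI[of _ _ "(y, (1 / norm w) *\<^sub>R w)"]) auto
    then have "d \<le> norm (y ** ((1 / norm w) *\<^sub>R w))"
      by (rule d)
    also have "\<dots> = norm (mat 1 :: 'a^'n^'n) / norm w"
      using that by (simp add: bounded_bilinear.scaleR_right[OF bounded_bilinear_matrix_mult])
    finally show ?thesis
      using \<open>d > 0\<close> \<open>w \<noteq> 0\<close> by (simp add: field_simps)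
  qed
  then show ?thesis
    unfolding bounded_iff by blast
qed

text \<open>The right inverses are the projection of a compact set of pairs; this avoids
continuity of matrix inversion.\<close>

lemma compact_right_inverses:
  fixes C :: "('a::{euclidean_space, real_algebra_1}^'n^'n) set"
  assumes C: "compact C" and inv: "\<And>y. y \<in> C \<Longrightarrow> invertible y"
  shows "compact {w. \<exists>y\<in>C. y ** w = mat 1}"
proof -
  obtain r where r: "\<And>w. w \<in> {w. \<exists>y\<in>C. y ** w = mat 1} \<Longrightarrow> norm w \<le> r"
    using bounded_right_inverses[OF assms] unfolding bounded_iff by blast
  define P where "P = (C \<times> cball 0 r) \<inter> {p. fst p ** snd p = mat 1}"
  have "compact P"
    unfolding P_def using C
    by (intro compact_Int_closed compact_Times closed_Collect_eq continuous_on_matrix_mult continuous_intros) auto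
  moreover have "{w. \<exists>y\<in>C. y ** w = mat 1} = snd ` P"
  proof
    show "{w. \<exists>y\<in>C. y ** w = mat 1} \<subseteq> snd ` P"
    proof
      fix w assume "w \<in> {w. \<exists>y\<in>C. y ** w = mat 1}"
      then obtain y where "y \<in> C" "y ** w = mat 1"
        by blast
      then have "(y, w) \<in> P"
        unfolding P_def using r by auto
      then show "w \<in> snd ` P"
        by (rule rev_image_eqI) simp
    qed
  qed (auto simp: P_def)
  ultimately show ?thesis
    using compact_continuous_image[OF continuous_on_snd[OF continuous_on_id]] by metis
qed

lemma finite_if_discrete_in_compact:
  assumes X: "compact X" and D: "discrete_in X D"
  shows "finite D"
proof -
  have "\<forall>x\<in>X. \<exists>U. open U \<and> x \<in> U \<and> finite (U \<inter> D)"
    using D unfolding discrete_in_def by blast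
  from bchoice[OF this] obtain U where U: "\<forall>x\<in>X. open (U x) \<and> x \<in> U x \<and> finite (U x \<inter> D)"
    by blast
  then have "X \<subseteq> (\<Union>x\<in>X. U x)"
    by blast
  with X U obtain F where F: "F \<subseteq> X" "finite F" "X \<subseteq> (\<Union>x\<in>F. U x)"
    by (metis compactE_image)
  have "D \<subseteq> (\<Union>x\<in>F. U x \<inter> D)"
    using D F(3) unfolding discrete_in_def by blast
  moreover have "finite (\<Union>x\<in>F. U x \<inter> D)"
    using F(1,2) U by (intro finite_UN_I) auto
  ultimately show ?thesis
    by (rule finite_subset)
qed

lemma discrete_in_subset:
  assumes "discrete_in X D" "D' \<subseteq> D"
  shows "discrete_in X D'"
  unfolding discrete_in_def
proof (intro conjI ballI)
  show "D' \<subseteq> X"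
    using assms unfolding discrete_in_def by blast
  fix x assume "x \<in> X"
  then obtain U where "open U" "x \<in> U" "finite (U \<inter> D)"
    using assms(1) unfolding discrete_in_def by blast
  moreover have "U \<inter> D' \<subseteq> U \<inter> D"
    using assms(2) by blast
  ultimately show "\<exists>U. open U \<and> x \<in> U \<and> finite (U \<inter> D')"
    by (meson finite_subset)
qed

lemma discrete_in_insert:
  assumes "discrete_in X D" "x \<in> X"
  shows "discrete_in X (insert x D)"
  using assms unfolding discrete_in_def by (simp add: Int_insert_right)

lemma homeomorphism_imp_bij_betw: "homeomorphism S T f g \<Longrightarrow> bij_betw f S T"
  unfolding homeomorphism_def by (intro bij_betw_byWitness[where f' = g]) auto

lemma exhaustion_min:
  assumes \<rho>: "exhaustion X \<rho>" and \<sigma>: "exhaustion X \<sigma>"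
  shows "exhaustion X (\<lambda>x. min (\<rho> x) (\<sigma> x))"
proof -
  have "{x\<in>X. min (\<rho> x) (\<sigma> x) \<le> c} = {x\<in>X. \<rho> x \<le> c} \<union> {x\<in>X. \<sigma> x \<le> c}" for c
    by auto
  then have "compact {x\<in>X. min (\<rho> x) (\<sigma> x) \<le> c}" for c
    using \<rho> \<sigma> unfolding exhaustion_def by (simp add: compact_Un)
  moreover have "continuous_on X (\<lambda>x. min (\<rho> x) (\<sigma> x))"
    using \<rho> \<sigma> unfolding exhaustion_def by (blast intro: continuous_on_min)
  moreover have "\<forall>x\<in>X. min (\<rho> x) (\<sigma> x) \<ge> 0"
    using \<rho> \<sigma> unfolding exhaustion_def by simp
  ultimately show ?thesis
    unfolding exhaustion_def by blast
qed

lemma exhaustion_compose_homeomorphism: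
  assumes h: "homeomorphism X X h k" and \<rho>: "exhaustion X \<rho>"
  shows "exhaustion X (\<lambda>x. \<rho> (h x))"
proof -
  have hX: "h ` X = X" and kX: "k ` X = X" and kh: "\<And>x. x \<in> X \<Longrightarrow> k (h x) = x"
    and hk: "\<And>y. y \<in> X \<Longrightarrow> h (k y) = y" and "continuous_on X h" "continuous_on X k"
    using h unfolding homeomorphism_def by auto
  have sublevel: "{x\<in>X. \<rho> (h x) \<le> c} = k ` {y\<in>X. \<rho> y \<le> c}" for c
  proof (intro equalityI subsetI)
    fix x assume x: "x \<in> {x\<in>X. \<rho> (h x) \<le> c}"
    then have "h x \<in> {y\<in>X. \<rho> y \<le> c}"
      using hX by auto
    moreover have "x = k (h x)"
      using x kh by simp
    ultimately show "x \<in> k ` {y\<in>X. \<rho> y \<le> c}"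
      by (rule rev_image_eqI)
  next
    fix x assume "x \<in> k ` {y\<in>X. \<rho> y \<le> c}"
    then obtain y where "y \<in> X" "\<rho> y \<le> c" "x = k y"
      by blast
    then show "x \<in> {x\<in>X. \<rho> (h x) \<le> c}"
      using kX hk by auto
  qed
  have "compact {x\<in>X. \<rho> (h x) \<le> c}" for c
  proof -
    have "continuous_on {y\<in>X. \<rho> y \<le> c} k"
      using \<open>continuous_on X k\<close> by (rule continuous_on_subset) auto
    moreover have "compact {y\<in>X. \<rho> y \<le> c}"
      using \<rho> unfolding exhaustion_def by blast
    ultimately show ?thesis
      unfolding sublevel by (rule compact_continuous_image)
  qed
  moreover have "continuous_on X (\<lambda>x. \<rho> (h x))"
    using \<rho> unfolding exhaustion_def
    by (intro continuous_on_compose2[OF _ \<open>continuous_on X h\<close>]) (auto simp: hX)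
  moreover have "\<forall>x\<in>X. \<rho> (h x) \<ge> 0"
    using \<rho> hX unfolding exhaustion_def by blast
  ultimately show ?thesis
    unfolding exhaustion_def by blast
qed

lemma matrix_mult_cscale_right: "A ** cscale c B = cscale c (A ** B)"
  by (simp add: cscale_def matrix_matrix_mult_def vec_eq_iff sum_distrib_left mult_ac)

definition cdifferentiable_at :: "((complex^'n^'n) \<Rightarrow> (complex^'n^'n)) \<Rightarrow> complex^'n^'n \<Rightarrow> bool" where
  "cdifferentiable_at F z \<longleftrightarrow>
     (\<exists>L. (F has_derivative L) (at z) \<and> (\<forall>c v. L (cscale c v) = cscale c (L v)))"

lemma holo_map_iff:
  "holo_map G \<phi> \<longleftrightarrow>
     (\<forall>x\<in>G. \<exists>U F. open U \<and> x \<in> U \<and> (\<forall>z\<in>U \<inter> G. F z = \<phi> z) \<and> (\<forall>z\<in>U. cdifferentiable_at F z))"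
  unfolding holo_map_def cdifferentiable_at_def ..

lemma holo_map_cong:
  assumes "\<And>x. x \<in> G \<Longrightarrow> \<phi> x = \<psi> x"
  shows "holo_map G \<phi> \<longleftrightarrow> holo_map G \<psi>"
proof -
  have "(\<forall>z\<in>U \<inter> G. F z = \<phi> z) \<longleftrightarrow> (\<forall>z\<in>U \<inter> G. F z = \<psi> z)" for U F
    using assms by auto
  then show ?thesis
    unfolding holo_map_def by simp
qed

lemma cdifferentiable_at_mult_left:
  assumes "cdifferentiable_at F z"
  shows "cdifferentiable_at (\<lambda>y. A ** F y) z"
proof -
  obtain L where D: "(F has_derivative L) (at z)" and L: "\<forall>c v. L (cscale c v) = cscale c (L v)"
    using assms unfolding cdifferentiable_at_def by blast
  have "((\<lambda>y. A ** F y) has_derivative (\<lambda>v. A ** L v)) (at z)"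
    using bounded_linear_matrix_mult_left D by (rule bounded_linear.has_derivative)
  with L show ?thesis
    unfolding cdifferentiable_at_def by (auto simp: matrix_mult_cscale_right)
qed

lemma cdifferentiable_at_compose_mult_left:
  assumes "cdifferentiable_at F (A ** z)"
  shows "cdifferentiable_at (\<lambda>y. F (A ** y)) z"
proof -
  obtain L where D: "(F has_derivative L) (at (A ** z))" and L: "\<forall>c v. L (cscale c v) = cscale c (L v)"
    using assms unfolding cdifferentiable_at_def by blast
  have "((\<lambda>y. F (A ** y)) has_derivative (\<lambda>v. L (A ** v))) (at z)"
    using diff_chain_at[OF bounded_linear_imp_has_derivative[OF bounded_linear_matrix_mult_left] D]
    by (simp add: o_def)
  with L show ?thesis
    unfolding cdifferentiable_at_def by (auto simp: matrix_mult_cscale_right)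
qed

lemma holo_map_mult_left:
  assumes "holo_map G \<phi>"
  shows "holo_map G (\<lambda>y. A ** \<phi> y)"
  unfolding holo_map_iff
proof
  fix x assume "x \<in> G"
  then obtain U F where "open U" "x \<in> U" "\<forall>z\<in>U \<inter> G. F z = \<phi> z" "\<forall>z\<in>U. cdifferentiable_at F z"
    using assms unfolding holo_map_iff by blast
  then show "\<exists>U F. open U \<and> x \<in> U \<and> (\<forall>z\<in>U \<inter> G. F z = A ** \<phi> z) \<and> (\<forall>z\<in>U. cdifferentiable_at F z)"
    by (intro exI[of _ U] exI[of _ "\<lambda>y. A ** F y"]) (simp add: cdifferentiable_at_mult_left)
qed

lemma holo_map_compose_mult_left:
  assumes AG: "\<And>z. z \<in> G \<Longrightarrow> A ** z \<in> G" and \<psi>: "holo_map G \<psi>"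
  shows "holo_map G (\<lambda>z. \<psi> (A ** z))"
  unfolding holo_map_iff
proof
  fix x assume "x \<in> G"
  then have "A ** x \<in> G"
    by (rule AG)
  then obtain U F where U: "open U" "A ** x \<in> U" "\<forall>z\<in>U \<inter> G. F z = \<psi> z"
    and F: "\<forall>z\<in>U. cdifferentiable_at F z"
    using \<psi> unfolding holo_map_iff by blast
  have "open ((\<lambda>z. A ** z) -` U)"
    using U(1) by (rule open_vimage) (rule linear_continuous_on[OF bounded_linear_matrix_mult_left])
  moreover have "\<forall>z\<in>(\<lambda>z. A ** z) -` U \<inter> G. F (A ** z) = \<psi> (A ** z)"
    using U(3) AG by simp
  moreover have "\<forall>z\<in>(\<lambda>z. A ** z) -` U. cdifferentiable_at (\<lambda>y. F (A ** y)) z"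
    using F by (simp add: cdifferentiable_at_compose_mult_left)
  ultimately show "\<exists>U F. open U \<and> x \<in> U \<and> (\<forall>z\<in>U \<inter> G. F z = \<psi> (A ** z)) \<and> (\<forall>z\<in>U. cdifferentiable_at F z)"
    using U(2) by (intro exI[of _ "(\<lambda>z. A ** z) -` U"] exI[of _ "\<lambda>y. F (A ** y)"] conjI) simp_all
qed

lemma tameD:
  assumes "tame G D" "exhaustion G \<rho>" "\<And>x. x \<in> D \<Longrightarrow> \<zeta> x \<ge> 0"
  obtains \<phi> where "biholo G \<phi>" "\<And>x. x \<in> D \<Longrightarrow> \<rho> (\<phi> x) \<ge> \<zeta> x"
  using assms unfolding tame_def by blast

lemma tame_subset:
  assumes D: "tame G D" and sub: "D' \<subseteq> D" and inf: "infinite D'"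
  shows "tame G D'"
  unfolding tame_def
proof (intro conjI allI impI)
  show "discrete_in G D'"
    using D sub unfolding tame_def by (blast intro: discrete_in_subset)
  fix \<rho> and \<zeta> :: "_ \<Rightarrow> real"
  assume \<rho>: "exhaustion G \<rho> \<and> (\<forall>x\<in>D'. \<zeta> x \<ge> 0)"
  define \<zeta>' where "\<zeta>' x = (if x \<in> D' then \<zeta> x else 0)" for x
  have "exhaustion G \<rho>" and "\<And>x. x \<in> D \<Longrightarrow> \<zeta>' x \<ge> 0"
    using \<rho> unfolding \<zeta>'_def by auto
  then obtain \<phi> where "biholo G \<phi>" "\<And>x. x \<in> D \<Longrightarrow> \<rho> (\<phi> x) \<ge> \<zeta>' x"
    using tameD[OF D] by blast
  then show "\<exists>\<phi>. biholo G \<phi> \<and> (\<forall>x\<in>D'. \<rho> (\<phi> x) \<ge> \<zeta> x)"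
    using sub unfolding \<zeta>'_def by force
qed (rule inf)

locale matrix_group =
  fixes G :: "(complex^'n^'n) set"
  assumes mult_closed: "A \<in> G \<Longrightarrow> B \<in> G \<Longrightarrow> A ** B \<in> G"
    and matrix_inv_closed: "A \<in> G \<Longrightarrow> matrix_inv A \<in> G"
    and invertible: "A \<in> G \<Longrightarrow> invertible A"

lemma lin_alg_group_imp_matrix_group: "lin_alg_group G \<Longrightarrow> matrix_group G"
  unfolding lin_alg_group_def matrix_group_def by blast

context matrix_group
begin

lemma translation_homeomorphism:
  assumes "g \<in> G"
  shows "homeomorphism G G (\<lambda>y. g ** y) (\<lambda>y. matrix_inv g ** y)"
proof (rule homeomorphismI)
  show "matrix_inv g ** (g ** y) = y" for y
    using invertible[OF assms] by (rule matrix_inv_mul_cancel_left)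
  show "g ** (matrix_inv g ** y) = y" for y
    using invertible[OF assms] by (rule matrix_mul_inv_cancel_left)
  show "(\<lambda>y. g ** y) ` G \<subseteq> G" "(\<lambda>y. matrix_inv g ** y) ` G \<subseteq> G"
    using assms by (auto intro: mult_closed matrix_inv_closed)
qed (simp_all add: linear_continuous_on[OF bounded_linear_matrix_mult_left])

lemma biholo_mult_left:
  assumes g: "g \<in> G" and \<phi>: "biholo G \<phi>"
  shows "biholo G (\<lambda>y. g ** \<phi> y)"
proof -
  let ?L = "\<lambda>y. g ** y" and ?L' = "\<lambda>y. matrix_inv g ** y"
  have L: "homeomorphism G G ?L ?L'"
    by (rule translation_homeomorphism[OF g])
  have bij\<phi>: "bij_betw \<phi> G G"
    using \<phi> unfolding biholo_def bij_betw_def by blast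
  have bij: "bij_betw (\<lambda>y. g ** \<phi> y) G G"
    using bij_betw_trans[OF bij\<phi> homeomorphism_imp_bij_betw[OF L]] by (simp add: o_def)
  have inverse: "the_inv_into G (\<lambda>y. g ** \<phi> y) z = the_inv_into G \<phi> (?L' z)" if "z \<in> G" for z
  proof (rule the_inv_into_f_eq)
    have z': "?L' z \<in> G"
      using g that by (simp add: mult_closed matrix_inv_closed)
    show "the_inv_into G \<phi> (?L' z) \<in> G"
      using bij_betw_apply[OF bij_betw_the_inv_into[OF bij\<phi>] z'] .
    show "g ** \<phi> (the_inv_into G \<phi> (?L' z)) = z"
      using g by (simp add: f_the_inv_into_f_bij_betw[OF bij\<phi> z'] matrix_mul_inv_cancel_left invertible)
  qed (use bij in \<open>simp add: bij_betw_def\<close>)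
  have "holo_map G (\<lambda>y. g ** \<phi> y)"
    using \<phi> unfolding biholo_def by (simp add: holo_map_mult_left)
  moreover have "holo_map G (\<lambda>z. the_inv_into G \<phi> (?L' z))"
  proof (rule holo_map_compose_mult_left)
    show "?L' z \<in> G" if "z \<in> G" for z
      using g that by (simp add: mult_closed matrix_inv_closed)
    show "holo_map G (the_inv_into G \<phi>)"
      using \<phi> unfolding biholo_def by blast
  qed
  then have "holo_map G (the_inv_into G (\<lambda>y. g ** \<phi> y))"
    using holo_map_cong[of G _ "\<lambda>z. the_inv_into G \<phi> (?L' z)", OF inverse] by simp
  ultimately show ?thesis
    using bij unfolding biholo_def bij_betw_def by blast
qed

lemma displace_compact:
  assumes G: "\<not> compact G" and C: "compact C" "C \<subseteq> G"
  shows "\<exists>g\<in>G. \<forall>y\<in>C. g ** y \<notin> C"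
proof (rule ccontr)
  assume "\<not> ?thesis"
  then have meets: "\<exists>y\<in>C. g ** y \<in> C" if "g \<in> G" for g
    using that by blast
  define R where "R = {w. \<exists>y\<in>C. y ** w = mat 1}"
  have "compact R"
    unfolding R_def using C by (intro compact_right_inverses) (auto intro: invertible)
  have "R \<subseteq> G"
  proof
    fix w assume "w \<in> R"
    then obtain y where "y \<in> G" "y ** w = mat 1"
      unfolding R_def using C by blast
    then show "w \<in> G"
      using right_inverse_eq_matrix_inv[OF invertible] matrix_inv_closed by metis
  qed
  have "G = (\<lambda>p. fst p ** snd p) ` (C \<times> R)"
  proof (intro equalityI subsetI)
    fix g assume "g \<in> G"
    then obtain y where y: "y \<in> C" "g ** y \<in> C"
      using meets by blast
    have inv_y: "y ** matrix_inv y = mat 1"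
      using y C by (auto intro: matrix_inv_right invertible)
    then have "(g ** y, matrix_inv y) \<in> C \<times> R"
      unfolding R_def using y by blast
    moreover have "g = (g ** y) ** matrix_inv y"
      using inv_y by (simp add: matrix_mul_assoc[symmetric])
    ultimately show "g \<in> (\<lambda>p. fst p ** snd p) ` (C \<times> R)"
      by (auto intro: rev_image_eqI)
  next
    fix g assume "g \<in> (\<lambda>p. fst p ** snd p) ` (C \<times> R)"
    then obtain a b where "a \<in> C" "b \<in> R" "g = a ** b"
      by auto
    then show "g \<in> G"
      using C(2) \<open>R \<subseteq> G\<close> by (simp add: mult_closed subset_iff)
  qed
  moreover have "compact ((\<lambda>p. fst p ** snd p) ` (C \<times> R))"
    using C \<open>compact R\<close>
    by (intro compact_continuous_image compact_Times continuous_on_matrix_mult continuous_intros) auto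
  ultimately show False
    using G by simp
qed

lemma tame_push_point:
  assumes D: "tame G D" and f: "f \<in> G" and \<rho>: "exhaustion G \<rho>" and \<zeta>: "\<And>x. x \<in> D \<Longrightarrow> \<zeta> x \<ge> 0"
  obtains \<phi> where "biholo G \<phi>" "\<And>x. x \<in> insert f D \<Longrightarrow> \<rho> (\<phi> x) \<ge> \<zeta> x"
proof -
  define C where "C = {x\<in>G. \<rho> x \<le> \<zeta> f}"
  have "\<not> compact G"
    using D finite_if_discrete_in_compact unfolding tame_def by blast
  moreover have "compact C" "C \<subseteq> G"
    using \<rho> unfolding C_def exhaustion_def by auto
  ultimately obtain g where g: "g \<in> G" and displaced: "\<forall>y\<in>C. g ** y \<notin> C"
    by (blast dest: displace_compact)
  have "exhaustion G (\<lambda>x. min (\<rho> x) (\<rho> (g ** x)))"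
    using \<rho> exhaustion_compose_homeomorphism[OF translation_homeomorphism[OF g] \<rho>]
    by (rule exhaustion_min)
  then obtain \<phi> where \<phi>: "biholo G \<phi>" and large: "\<And>x. x \<in> D \<Longrightarrow> min (\<rho> (\<phi> x)) (\<rho> (g ** \<phi> x)) \<ge> \<zeta> x"
    using tameD[where \<zeta> = \<zeta>, OF D _ \<zeta>] by blast
  have "\<phi> f \<in> G"
    using \<phi> f unfolding biholo_def by blast
  show thesis
  proof (cases "\<rho> (\<phi> f) \<ge> \<zeta> f")
    case True
    then show thesis
      using that[OF \<phi>] large by (metis insert_iff min.boundedE)
  next
    case False
    then have "\<phi> f \<in> C"
      using \<open>\<phi> f \<in> G\<close> unfolding C_def by simp
    then have "\<rho> (g ** \<phi> f) \<ge> \<zeta> f"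
      using displaced g \<open>\<phi> f \<in> G\<close> mult_closed unfolding C_def by force
    then show thesis
      using that[OF biholo_mult_left[OF g \<phi>]] large by (metis insert_iff min.boundedE)
  qed
qed

lemma tame_insert:
  assumes D: "tame G D" and f: "f \<in> G"
  shows "tame G (insert f D)"
  unfolding tame_def
proof (intro conjI allI impI)
  show "infinite (insert f D)" "discrete_in G (insert f D)"
    using D f unfolding tame_def by (auto intro: discrete_in_insert)
  fix \<rho> and \<zeta> :: "_ \<Rightarrow> real"
  assume "exhaustion G \<rho> \<and> (\<forall>x\<in>insert f D. \<zeta> x \<ge> 0)"
  then obtain \<phi> where "biholo G \<phi>" "\<And>x. x \<in> insert f D \<Longrightarrow> \<rho> (\<phi> x) \<ge> \<zeta> x"
    using tame_push_point[OF D f, of \<rho> \<zeta>] by blast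
  then show "\<exists>\<phi>. biholo G \<phi> \<and> (\<forall>x\<in>insert f D. \<rho> (\<phi> x) \<ge> \<zeta> x)"
    by blast
qed

lemma tame_Un_finite:
  assumes "tame G D" "finite F" "F \<subseteq> G"
  shows "tame G (D \<union> F)"
  using assms(2,3)
proof (induction F rule: finite_induct)
  case empty
  then show ?case
    using assms(1) by simp
next
  case (insert x F)
  then show ?case
    using tame_insert[of "D \<union> F" x] by simp
qed

lemma tame_if_finite_diff:
  assumes "tame G D" "D' \<subseteq> G" "infinite D'" "finite (D' - D)"
  shows "tame G D'"
proof -
  have "tame G (D \<union> (D' - D))"
    using assms by (intro tame_Un_finite) auto
  moreover have "D' \<subseteq> D \<union> (D' - D)"
    by blast
  ultimately show ?thesis
    using assms(3) by (rule tame_subset)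
qed

end

theorem corollary2p4:
  fixes G D D' :: "(complex^'n^'n) set"
  assumes "lin_alg_group G" and "character_free G"
    and "infinite D" and "discrete_in G D"
    and "infinite D'" and "discrete_in G D'"
    and "finite ((D - D') \<union> (D' - D))"
  shows "tame G D \<longleftrightarrow> tame G D'"
proof -
  interpret matrix_group G
    using assms(1) by (rule lin_alg_group_imp_matrix_group)
  have "D \<subseteq> G" "D' \<subseteq> G"
    using assms(4,6) unfolding discrete_in_def by blast+
  moreover have "finite (D - D')" "finite (D' - D)"
    using assms(7) by auto
  ultimately show ?thesis
    using assms(3,5) tame_if_finite_diff by blast
qed

end
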